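(* In the setting of a domain $U\subset\mathbb{R}^n$ with $\mathbb{R}^{>0}U\subset U$ and a smooth positive homogeneous function $h$ of degree $k>1$ on $U$ for which $g_U=-\partial^2h$ restricts to a positive definite metric on $\{h=1\}$, let for $c\in\mathbb{R}$ $$g'_c:=-\partial^2\log(h+c)=\frac1{h+c}g_U+\frac1{(h+c)^2}(dh)^2$$ on $U_c:=\{x\in U\mid h(x)+c>0\}$ if $c\le0$ and $U_c:=\{x\in U\mid h(x)-c(k-1)>0\}$ if $c>0$. Then: (1) $g'_c=\frac1{h+c}\check g+\frac{h-c(k-1)}{kh}\frac1{(h+c)^2}(dh)^2$, where $\check g=g_U-\frac{g_U(\xi,\cdot)^2}{g_U(\xi,\xi)}$ and $\xi=\sum x^i\partial_{x^i}$; (2) $g'_c$ is a Riemannian metric on $U_c$; (3) if $cc'>0$, then $(U_c,g'_c)$ and $(U_{c'},g'_{c'})$ are isometric, an isometry being given by restriction of a suitable scalar multiplication $x\mapsto\lambda x$, $\lambda>0$.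
   Context: $\partial^2$ denotes the real Hessian with respect to the linear coordinates $x^1,\dots,x^n$. It is known (and may be used) that $\check g$ is positive semidefinite with kernel $\mathbb{R}\xi$ and $g_U=\check g-\frac{k-1}{kh}(dh)^2$. *)

theory Defs
  imports "HOL-Analysis.Analysis"
begin

definition pd :: "'n::finite \<Rightarrow> (real^'n \<Rightarrow> real) \<Rightarrow> real^'n \<Rightarrow> real" where
  "pd i f x = deriv (\<lambda>t. f (x + t *\<^sub>R axis i 1)) 0"

fun iter_pd :: "'n::finite list \<Rightarrow> (real^'n \<Rightarrow> real) \<Rightarrow> real^'n \<Rightarrow> real" where
  "iter_pd [] f = f"
| "iter_pd (i # is) f = pd i (iter_pd is f)"

definition smooth_on :: "(real^'n::finite) set \<Rightarrow> (real^'n \<Rightarrow> real) \<Rightarrow> bool" where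
  "smooth_on U f \<longleftrightarrow>
     (\<forall>is. continuous_on U (iter_pd is f) \<and>
        (\<forall>i. \<forall>x\<in>U. (\<lambda>t. iter_pd is f (x + t *\<^sub>R axis i 1)) differentiable (at 0)))"

definition hess :: "(real^'n::finite \<Rightarrow> real) \<Rightarrow> real^'n \<Rightarrow> real^'n \<Rightarrow> real^'n \<Rightarrow> real" where
  "hess f x v w = (\<Sum>i\<in>UNIV. \<Sum>j\<in>UNIV. pd i (pd j f) x * v$i * w$j)"

definition dif :: "(real^'n::finite \<Rightarrow> real) \<Rightarrow> real^'n \<Rightarrow> real^'n \<Rightarrow> real" where
  "dif f x v = (\<Sum>i\<in>UNIV. pd i f x * v$i)"

definition gU :: "(real^'n::finite \<Rightarrow> real) \<Rightarrow> real^'n \<Rightarrow> real^'n \<Rightarrow> real^'n \<Rightarrow> real" where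
  "gU h x v w = - hess h x v w"

text \<open>check g = g_U - g_U(xi,.)^2 / g_U(xi,xi), where xi at x is the position vector x.\<close>
definition gcheck :: "(real^'n::finite \<Rightarrow> real) \<Rightarrow> real^'n \<Rightarrow> real^'n \<Rightarrow> real^'n \<Rightarrow> real" where
  "gcheck h x v w = gU h x v w - gU h x x v * gU h x x w / gU h x x x"

definition gprime :: "(real^'n::finite \<Rightarrow> real) \<Rightarrow> real \<Rightarrow> real^'n \<Rightarrow> real^'n \<Rightarrow> real^'n \<Rightarrow> real" where
  "gprime h c x v w = - hess (\<lambda>y. ln (h y + c)) x v w"

definition Uc :: "(real^'n::finite) set \<Rightarrow> (real^'n \<Rightarrow> real) \<Rightarrow> real \<Rightarrow> real \<Rightarrow> (real^'n) set" where
  "Uc U h k c = (if c \<le> 0 then {x\<in>U. h x + c > 0} else {x\<in>U. h x - c * (k - 1) > 0})"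

end

theory Submission
  imports Defs
begin

text \<open>Formula (1) is the quotient rule for the second derivatives of \<open>ln (h + c)\<close>. Differentiating
  the homogeneity relation gives Euler's identities \<open>dh(\<xi>) = k h\<close> and \<open>g\<^sub>U(\<xi>, \<cdot>) = -(k - 1) dh\<close>,
  from which (2) follows by algebra. Writing \<open>v = u + a \<xi>\<close> with \<open>dh(u) = 0\<close> gives
  \<open>gcheck(v, v) = g\<^sub>U(u, u)\<close>, which is positive for \<open>u \<noteq> 0\<close> after rescaling the base point onto
  \<open>{h = 1}\<close>; the coefficient \<open>h - c (k - 1)\<close> of \<open>(dh)\<^sup>2\<close> in (2) is positive on \<open>U\<^sub>c\<close>, so \<open>g'\<^sub>c\<close> is
  positive definite. Under \<open>x \<mapsto> \<lambda>x\<close> the quantities \<open>h\<close>, \<open>g\<^sub>U\<close> and \<open>dh\<close> (on scaled vectors) all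
  scale by \<open>\<lambda>\<^sup>k\<close>, so \<open>\<lambda>\<^sup>k = c'/c\<close> gives the isometry.\<close>

section \<open>Partial derivatives along coordinate lines\<close>

definition partially_differentiable :: "(real^'n::finite \<Rightarrow> real) \<Rightarrow> real^'n \<Rightarrow> 'n \<Rightarrow> bool" where
  "partially_differentiable f x i \<longleftrightarrow> (\<lambda>t. f (x + t *\<^sub>R axis i 1)) differentiable (at 0)"

lemma has_real_derivative_pd:
  assumes "partially_differentiable f x i"
  shows "((\<lambda>t. f (x + t *\<^sub>R axis i 1)) has_real_derivative pd i f x) (at 0)"
  using assms unfolding pd_def partially_differentiable_def
  by (simp add: DERIV_deriv_iff_real_differentiable)

lemma pd_eqI:
  assumes "((\<lambda>t. f (x + t *\<^sub>R axis i 1)) has_real_derivative D) (at 0)"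
  shows "partially_differentiable f x i" "pd i f x = D"
  using assms unfolding pd_def partially_differentiable_def
  by (auto simp: real_differentiable_def intro: DERIV_imp_deriv)

lemma has_real_derivative_pd_along_line:
  assumes "partially_differentiable f (y + s *\<^sub>R axis i 1) i"
  shows "((\<lambda>t. f (y + t *\<^sub>R axis i 1)) has_real_derivative pd i f (y + s *\<^sub>R axis i 1)) (at s)"
proof -
  have "((\<lambda>t. f (y + (t + s) *\<^sub>R axis i 1)) has_real_derivative pd i f (y + s *\<^sub>R axis i 1)) (at 0)"
    using has_real_derivative_pd[OF assms] by (simp add: algebra_simps scaleR_add_left)
  then show ?thesis using DERIV_shift[of "\<lambda>t. f (y + t *\<^sub>R axis i 1)" _ 0 s] by simp
qed

lemma eventually_line_in_open:
  fixes x :: "real^'n::finite"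
  assumes "open V" "x \<in> V"
  shows "eventually (\<lambda>t. x + t *\<^sub>R axis i 1 \<in> V) (nhds 0)"
proof -
  obtain e where e: "e > 0" "ball x e \<subseteq> V" using assms open_contains_ball by blast
  have "x + t *\<^sub>R axis i 1 \<in> V" if "dist t 0 < e" for t :: real
    using that e by (auto simp: dist_norm)
  then show ?thesis unfolding eventually_nhds_metric using e(1) by blast
qed

lemma pd_cong_open:
  assumes "open V" "x \<in> V" "\<forall>y\<in>V. f y = g y"
  shows "pd i f x = pd i g x"
  unfolding pd_def
  by (rule deriv_cong_ev[OF _ refl])
    (use eventually_line_in_open[OF assms(1,2), of i] assms(3) in \<open>auto elim: eventually_mono\<close>)

lemma partially_differentiable_cong_open:
  assumes "open V" "x \<in> V" "\<forall>y\<in>V. f y = g y" "partially_differentiable f x i"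
  shows "partially_differentiable g x i"
proof -
  have ev: "eventually (\<lambda>t. f (x + t *\<^sub>R axis i 1) = g (x + t *\<^sub>R axis i 1)) (nhds 0)"
    using eventually_line_in_open[OF assms(1,2), of i] assms(3) by (auto elim: eventually_mono)
  have "((\<lambda>t. g (x + t *\<^sub>R axis i 1)) has_real_derivative pd i f x) (at 0)"
    using has_real_derivative_pd[OF assms(4)] DERIV_cong_ev[OF refl ev refl] by simp
  then show ?thesis by (rule pd_eqI)
qed

lemma iter_pd_cong_open:
  assumes "open V" "\<forall>y\<in>V. f y = g y"
  shows "\<forall>y\<in>V. iter_pd is f y = iter_pd is g y"
  using assms by (induction "is") (auto intro: pd_cong_open)

lemma MVT_abs:
  fixes f f' :: "real \<Rightarrow> real"
  assumes "\<forall>r. \<bar>r\<bar> \<le> \<bar>s\<bar> \<longrightarrow> (f has_real_derivative f' r) (at r)"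
  shows "\<exists>z. \<bar>z\<bar> \<le> \<bar>s\<bar> \<and> f s - f 0 = s * f' z"
proof (cases s "0::real" rule: linorder_cases)
  case less
  obtain z where "s < z" "z < 0" "f 0 - f s = (0 - s) * f' z"
    using MVT2[OF less, of f f'] assms by auto
  then show ?thesis by (intro exI[of _ z]) (auto simp: algebra_simps)
next
  case greater
  obtain z where "0 < z" "z < s" "f s - f 0 = (s - 0) * f' z"
    using MVT2[OF greater, of f f'] assms by auto
  then show ?thesis by (intro exI[of _ z]) auto
qed auto

lemma pd_increment_estimate:
  fixes f :: "real^'n::finite \<Rightarrow> real"
  assumes U: "open U" "x \<in> U" and pdx: "\<forall>y\<in>U. partially_differentiable f y a"
    and cont: "continuous_on U (pd a f)" and e: "e > 0"
  obtains d where "d > 0"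
    "\<And>y s. norm (y - x) + \<bar>s\<bar> < d \<Longrightarrow> \<bar>f (y + s *\<^sub>R axis a 1) - f y - pd a f x * s\<bar> \<le> e * \<bar>s\<bar>"
proof -
  obtain r where r: "r > 0" "ball x r \<subseteq> U" using U open_contains_ball by blast
  obtain d where d: "d > 0" "\<forall>z\<in>U. dist z x < d \<longrightarrow> dist (pd a f z) (pd a f x) < e"
    using cont U(2) e unfolding continuous_on_iff by blast
  show ?thesis
  proof (rule that[of "min r d"])
    show "min r d > 0" using r d by simp
    fix y s assume ys: "norm (y - x) + \<bar>s\<bar> < min r d"
    have near: "y + t *\<^sub>R axis a 1 \<in> U \<and> dist (y + t *\<^sub>R axis a 1) x < d" if "\<bar>t\<bar> \<le> \<bar>s\<bar>" for t
    proof -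
      have "dist (y + t *\<^sub>R axis a 1) x \<le> norm (y - x) + \<bar>t\<bar>"
        using norm_triangle_ineq[of "y - x" "t *\<^sub>R axis a 1"] by (simp add: dist_norm algebra_simps)
      then have "dist (y + t *\<^sub>R axis a 1) x < min r d" using ys that by linarith
      then show ?thesis using r by (auto simp: dist_commute)
    qed
    have "\<forall>t. \<bar>t\<bar> \<le> \<bar>s\<bar> \<longrightarrow>
        ((\<lambda>t. f (y + t *\<^sub>R axis a 1)) has_real_derivative pd a f (y + t *\<^sub>R axis a 1)) (at t)"
      using near pdx by (auto intro!: has_real_derivative_pd_along_line)
    from MVT_abs[OF this] obtain z where z: "\<bar>z\<bar> \<le> \<bar>s\<bar>"
      "f (y + s *\<^sub>R axis a 1) - f y = s * pd a f (y + z *\<^sub>R axis a 1)" by auto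
    have "\<bar>pd a f (y + z *\<^sub>R axis a 1) - pd a f x\<bar> < e"
      using d(2) near[OF z(1)] by (auto simp: dist_real_def)
    then have "\<bar>s\<bar> * \<bar>pd a f (y + z *\<^sub>R axis a 1) - pd a f x\<bar> \<le> \<bar>s\<bar> * e"
      by (intro mult_left_mono) auto
    then show "\<bar>f (y + s *\<^sub>R axis a 1) - f y - pd a f x * s\<bar> \<le> e * \<bar>s\<bar>"
      using z(2) by (simp add: abs_mult[symmetric] algebra_simps)
  qed
qed

lemma norm_sum_axis_le:
  fixes v :: "real^'n::finite"
  shows "norm (\<Sum>i\<in>S. v$i *\<^sub>R axis i (1::real)) \<le> real CARD('n) * norm v"
proof -
  have "norm (\<Sum>i\<in>S. v$i *\<^sub>R axis i (1::real)) \<le> (\<Sum>i\<in>S. \<bar>v$i\<bar>)"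
    using norm_sum[of "\<lambda>i. v$i *\<^sub>R axis i (1::real)" S] by simp
  also have "\<dots> \<le> (\<Sum>i\<in>S. norm v)" by (intro sum_mono component_le_norm_cart)
  also have "\<dots> \<le> real CARD('n) * norm v"
    by (simp add: card_mono mult_right_mono)
  finally show ?thesis .
qed

lemma pd_sum_increment_estimate:
  fixes f :: "real^'n::finite \<Rightarrow> real"
  assumes U: "open U" "x \<in> U" and pdx: "\<forall>i. \<forall>y\<in>U. partially_differentiable f y i"
    and cont: "\<forall>i. continuous_on U (pd i f)" and S: "finite S" and e: "e > 0"
  shows "\<exists>d>0. \<forall>v. norm v < d \<longrightarrow>
    \<bar>f (x + (\<Sum>i\<in>S. v$i *\<^sub>R axis i 1)) - f x - (\<Sum>i\<in>S. pd i f x * v$i)\<bar> \<le> e * norm v"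
  using S e
proof (induction S arbitrary: e rule: finite_induct)
  case empty
  then show ?case by (auto intro: exI[of _ 1])
next
  case (insert a S)
  define N where "N = real CARD('n)"
  have e2: "e / 2 > 0" using insert.prems by simp
  obtain d1 where d1: "d1 > 0" "\<forall>v. norm v < d1 \<longrightarrow>
      \<bar>f (x + (\<Sum>i\<in>S. v$i *\<^sub>R axis i 1)) - f x - (\<Sum>i\<in>S. pd i f x * v$i)\<bar> \<le> e/2 * norm v"
    using insert.IH[OF e2] by blast
  obtain d2 where d2: "d2 > 0" "\<And>y s. norm (y - x) + \<bar>s\<bar> < d2 \<Longrightarrow>
      \<bar>f (y + s *\<^sub>R axis a 1) - f y - pd a f x * s\<bar> \<le> e/2 * \<bar>s\<bar>"
    using pd_increment_estimate[OF U _ _ e2] pdx cont by metis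
  have N0: "N \<ge> 0" by (simp add: N_def)
  show ?case
  proof (intro exI[of _ "min d1 (d2 / (N + 1))"] conjI allI impI)
    show "min d1 (d2 / (N + 1)) > 0" using d1 d2 N0 by simp
    fix v :: "real^'n" assume nv: "norm v < min d1 (d2 / (N + 1))"
    define y where "y = x + (\<Sum>i\<in>S. v$i *\<^sub>R axis i 1)"
    have "norm (y - x) + \<bar>v$a\<bar> \<le> N * norm v + norm v"
      using norm_sum_axis_le[of v S] component_le_norm_cart[of v a] by (simp add: y_def N_def)
    also have "\<dots> < d2" using nv N0 by (simp add: field_simps)
    finally have "\<bar>f (y + v$a *\<^sub>R axis a 1) - f y - pd a f x * v$a\<bar> \<le> e/2 * \<bar>v$a\<bar>"
      by (rule d2(2))
    also have "\<dots> \<le> e/2 * norm v"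
      using component_le_norm_cart[of v a] e2 by (intro mult_left_mono) auto
    finally have step: "\<bar>f (y + v$a *\<^sub>R axis a 1) - f y - pd a f x * v$a\<bar> \<le> e/2 * norm v" .
    have rest: "\<bar>f y - f x - (\<Sum>i\<in>S. pd i f x * v$i)\<bar> \<le> e/2 * norm v"
      using d1(2) nv unfolding y_def by auto
    have "x + (\<Sum>i\<in>insert a S. v$i *\<^sub>R axis i 1) = y + v$a *\<^sub>R axis a 1"
      using insert.hyps by (simp add: y_def algebra_simps)
    moreover have "(\<Sum>i\<in>insert a S. pd i f x * v$i) = pd a f x * v$a + (\<Sum>i\<in>S. pd i f x * v$i)"
      using insert.hyps by simp
    ultimately show "\<bar>f (x + (\<Sum>i\<in>insert a S. v$i *\<^sub>R axis i 1)) - f x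
        - (\<Sum>i\<in>insert a S. pd i f x * v$i)\<bar> \<le> e * norm v"
      using step rest unfolding abs_le_iff by (simp; linarith)
  qed
qed

lemma has_derivative_continuous_pd:
  fixes f :: "real^'n::finite \<Rightarrow> real"
  assumes "open U" "x \<in> U" "\<forall>i. \<forall>y\<in>U. partially_differentiable f y i"
    and "\<forall>i. continuous_on U (pd i f)"
  shows "(f has_derivative (\<lambda>v. \<Sum>i\<in>UNIV. pd i f x * v$i)) (at x)"
  unfolding has_derivative_at_alt
proof (intro conjI allI impI)
  have "(\<lambda>v. \<Sum>i\<in>UNIV. pd i f x * v$i) = (\<lambda>v. v \<bullet> (\<chi> i. pd i f x))"
    by (auto simp: inner_vec_def mult.commute)
  then show "bounded_linear (\<lambda>v. \<Sum>i\<in>UNIV. pd i f x * v$i)"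
    by (simp add: bounded_linear_inner_left)
  fix e :: real assume "e > 0"
  then obtain d where d: "d > 0" "\<forall>v. norm v < d \<longrightarrow>
      \<bar>f (x + (\<Sum>i\<in>UNIV. v$i *\<^sub>R axis i 1)) - f x - (\<Sum>i\<in>UNIV. pd i f x * v$i)\<bar> \<le> e * norm v"
    using pd_sum_increment_estimate[OF assms finite] by blast
  have expansion: "(\<Sum>i\<in>UNIV. v$i *\<^sub>R axis i 1) = v" for v :: "real^'n"
    using basis_expansion[of v] by (simp add: scalar_mult_eq_scaleR)
  show "\<exists>d>0. \<forall>y. norm (y - x) < d \<longrightarrow>
      norm (f y - f x - (\<Sum>i\<in>UNIV. pd i f x * (y - x)$i)) \<le> e * norm (y - x)"
  proof (intro exI[of _ d] conjI allI impI d(1))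
    fix y :: "real^'n" assume "norm (y - x) < d"
    then show "norm (f y - f x - (\<Sum>i\<in>UNIV. pd i f x * (y - x)$i)) \<le> e * norm (y - x)"
      using d(2)[rule_format, of "y - x"] unfolding expansion by simp
  qed
qed

section \<open>Symmetry of second derivatives and Euler's identity\<close>

lemma second_difference_mvt:
  fixes f :: "real^'n::finite \<Rightarrow> real"
  assumes inU: "\<And>a b. \<bar>a\<bar> \<le> \<bar>s\<bar> \<Longrightarrow> \<bar>b\<bar> \<le> \<bar>s\<bar> \<Longrightarrow> x + a *\<^sub>R axis i 1 + b *\<^sub>R axis j 1 \<in> U"
    and pdi: "\<forall>y\<in>U. partially_differentiable f y i"
    and pdij: "\<forall>y\<in>U. partially_differentiable (pd i f) y j"
  shows "\<exists>a b. \<bar>a\<bar> \<le> \<bar>s\<bar> \<and> \<bar>b\<bar> \<le> \<bar>s\<bar> \<and>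
     f (x + s *\<^sub>R axis i 1 + s *\<^sub>R axis j 1) - f (x + s *\<^sub>R axis i 1) - f (x + s *\<^sub>R axis j 1) + f x
       = s * s * pd j (pd i f) (x + a *\<^sub>R axis i 1 + b *\<^sub>R axis j 1)"
proof -
  define P where "P a b = x + a *\<^sub>R axis i 1 + b *\<^sub>R axis j (1::real)" for a b
  have Pi: "P a b = (x + b *\<^sub>R axis j 1) + a *\<^sub>R axis i 1" for a b by (simp add: P_def algebra_simps)
  have Pj: "P a b = (x + a *\<^sub>R axis i 1) + b *\<^sub>R axis j 1" for a b by (simp add: P_def)
  define \<phi> where "\<phi> a = f (P a s) - f (P a 0)" for a
  have "\<forall>r. \<bar>r\<bar> \<le> \<bar>s\<bar> \<longrightarrow> (\<phi> has_real_derivative (pd i f (P r s) - pd i f (P r 0))) (at r)"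
  proof (intro allI impI)
    fix r :: real assume r: "\<bar>r\<bar> \<le> \<bar>s\<bar>"
    have "((\<lambda>a. f ((x + b *\<^sub>R axis j 1) + a *\<^sub>R axis i 1)) has_real_derivative
        pd i f ((x + b *\<^sub>R axis j 1) + r *\<^sub>R axis i 1)) (at r)" if "\<bar>b\<bar> \<le> \<bar>s\<bar>" for b
      by (rule has_real_derivative_pd_along_line)
        (use pdi inU[OF r that] in \<open>simp add: algebra_simps\<close>)
    from this[of s] this[of 0]
    show "(\<phi> has_real_derivative (pd i f (P r s) - pd i f (P r 0))) (at r)"
      unfolding \<phi>_def Pi by (intro DERIV_diff) auto
  qed
  from MVT_abs[OF this] obtain a where a: "\<bar>a\<bar> \<le> \<bar>s\<bar>"
    "\<phi> s - \<phi> 0 = s * (pd i f (P a s) - pd i f (P a 0))" by blast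
  have "\<forall>r. \<bar>r\<bar> \<le> \<bar>s\<bar> \<longrightarrow> ((\<lambda>b. pd i f (P a b)) has_real_derivative pd j (pd i f) (P a r)) (at r)"
  proof (intro allI impI)
    fix r :: real assume r: "\<bar>r\<bar> \<le> \<bar>s\<bar>"
    show "((\<lambda>b. pd i f (P a b)) has_real_derivative pd j (pd i f) (P a r)) (at r)"
      unfolding Pj by (rule has_real_derivative_pd_along_line)
        (use pdij inU[OF a(1) r] in \<open>simp add: algebra_simps\<close>)
  qed
  from MVT_abs[OF this] obtain b where b: "\<bar>b\<bar> \<le> \<bar>s\<bar>"
    "pd i f (P a s) - pd i f (P a 0) = s * pd j (pd i f) (P a b)" by blast
  have "f (x + s *\<^sub>R axis i 1 + s *\<^sub>R axis j 1) - f (x + s *\<^sub>R axis i 1) - f (x + s *\<^sub>R axis j 1) + f x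
      = \<phi> s - \<phi> 0" by (simp add: \<phi>_def P_def)
  also have "\<dots> = s * s * pd j (pd i f) (P a b)" using a(2) b(2) by simp
  finally show ?thesis using a(1) b(1) by (auto simp: P_def)
qed

lemma pd_commute:
  fixes f :: "real^'n::finite \<Rightarrow> real"
  assumes U: "open U" "x \<in> U"
    and pdi: "\<forall>y\<in>U. partially_differentiable f y i" and pdj: "\<forall>y\<in>U. partially_differentiable f y j"
    and pdij: "\<forall>y\<in>U. partially_differentiable (pd i f) y j"
    and pdji: "\<forall>y\<in>U. partially_differentiable (pd j f) y i"
    and cont_ij: "continuous_on U (pd j (pd i f))" and cont_ji: "continuous_on U (pd i (pd j f))"
  shows "pd i (pd j f) x = pd j (pd i f) x"
proof (rule ccontr)
  assume ne: "pd i (pd j f) x \<noteq> pd j (pd i f) x"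
  define \<epsilon> where "\<epsilon> = \<bar>pd i (pd j f) x - pd j (pd i f) x\<bar> / 2"
  have e0: "\<epsilon> > 0" using ne by (simp add: \<epsilon>_def)
  obtain d1 where d1: "d1 > 0" "\<forall>z\<in>U. dist z x < d1 \<longrightarrow> dist (pd j (pd i f) z) (pd j (pd i f) x) < \<epsilon>"
    using cont_ij U(2) e0 unfolding continuous_on_iff by meson
  obtain d2 where d2: "d2 > 0" "\<forall>z\<in>U. dist z x < d2 \<longrightarrow> dist (pd i (pd j f) z) (pd i (pd j f) x) < \<epsilon>"
    using cont_ji U(2) e0 unfolding continuous_on_iff by meson
  obtain r where r: "r > 0" "ball x r \<subseteq> U" using U open_contains_ball by blast
  define s where "s = min r (min d1 d2) / 3"
  have s0: "s > 0" using r d1 d2 by (simp add: s_def)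
  have close: "dist (x + a *\<^sub>R axis p 1 + b *\<^sub>R axis q 1) x < min r (min d1 d2)"
    if "\<bar>a\<bar> \<le> \<bar>s\<bar>" "\<bar>b\<bar> \<le> \<bar>s\<bar>" for a b p q
  proof -
    have "dist (x + a *\<^sub>R axis p 1 + b *\<^sub>R axis q 1) x \<le> norm (a *\<^sub>R axis p (1::real)) + norm (b *\<^sub>R axis q (1::real))"
      using norm_triangle_ineq[of "a *\<^sub>R axis p (1::real)" "b *\<^sub>R axis q 1"] by (simp add: dist_norm)
    also have "\<dots> \<le> 2 * s" using that s0 by simp
    finally show ?thesis using s0 unfolding s_def by linarith
  qed
  have inU: "x + a *\<^sub>R axis p 1 + b *\<^sub>R axis q 1 \<in> U" if "\<bar>a\<bar> \<le> \<bar>s\<bar>" "\<bar>b\<bar> \<le> \<bar>s\<bar>" for a b p q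
    using close[OF that, of p q] r by (auto simp: dist_commute)
  obtain a b where ab: "\<bar>a\<bar> \<le> \<bar>s\<bar>" "\<bar>b\<bar> \<le> \<bar>s\<bar>"
    "f (x + s *\<^sub>R axis i 1 + s *\<^sub>R axis j 1) - f (x + s *\<^sub>R axis i 1) - f (x + s *\<^sub>R axis j 1) + f x
       = s * s * pd j (pd i f) (x + a *\<^sub>R axis i 1 + b *\<^sub>R axis j 1)"
    using second_difference_mvt[of s x i j U f, OF inU pdi pdij] by blast
  obtain a' b' where ab': "\<bar>a'\<bar> \<le> \<bar>s\<bar>" "\<bar>b'\<bar> \<le> \<bar>s\<bar>"
    "f (x + s *\<^sub>R axis j 1 + s *\<^sub>R axis i 1) - f (x + s *\<^sub>R axis j 1) - f (x + s *\<^sub>R axis i 1) + f x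
       = s * s * pd i (pd j f) (x + a' *\<^sub>R axis j 1 + b' *\<^sub>R axis i 1)"
    using second_difference_mvt[of s x j i U f, OF inU pdj pdji] by blast
  have "f (x + s *\<^sub>R axis j 1 + s *\<^sub>R axis i 1) = f (x + s *\<^sub>R axis i 1 + s *\<^sub>R axis j 1)"
    by (simp add: algebra_simps)
  then have "s * s * pd j (pd i f) (x + a *\<^sub>R axis i 1 + b *\<^sub>R axis j 1)
      = s * s * pd i (pd j f) (x + a' *\<^sub>R axis j 1 + b' *\<^sub>R axis i 1)"
    using ab(3) ab'(3) by linarith
  then have "pd j (pd i f) (x + a *\<^sub>R axis i 1 + b *\<^sub>R axis j 1)
      = pd i (pd j f) (x + a' *\<^sub>R axis j 1 + b' *\<^sub>R axis i 1)"
    using s0 by simp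
  moreover have "\<bar>pd j (pd i f) (x + a *\<^sub>R axis i 1 + b *\<^sub>R axis j 1) - pd j (pd i f) x\<bar> < \<epsilon>"
    using d1(2) inU[OF ab(1,2)] close[OF ab(1,2)] by (auto simp: dist_real_def)
  moreover have "\<bar>pd i (pd j f) (x + a' *\<^sub>R axis j 1 + b' *\<^sub>R axis i 1) - pd i (pd j f) x\<bar> < \<epsilon>"
    using d2(2) inU[OF ab'(1,2)] close[OF ab'(1,2)] by (auto simp: dist_real_def)
  ultimately show False unfolding \<epsilon>_def by (simp add: abs_if split: if_splits)
qed

lemma pd_homogeneous:
  fixes g :: "real^'n::finite \<Rightarrow> real"
  assumes U: "open U"
    and hom: "\<forall>t>0. \<forall>y\<in>U. g (t *\<^sub>R y) = t powr m * g y"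
    and pdg: "\<forall>y\<in>U. partially_differentiable g y i" and t: "t > 0" and y: "y \<in> U"
  shows "pd i g (t *\<^sub>R y) = t powr (m - 1) * pd i g y"
proof -
  obtain r where r: "r > 0" "ball y r \<subseteq> U" using U y open_contains_ball by blast
  have ev: "eventually (\<lambda>s. g (t *\<^sub>R y + s *\<^sub>R axis i 1) = t powr m * g (y + (s / t) *\<^sub>R axis i 1)) (nhds 0)"
    unfolding eventually_nhds_metric
  proof (intro exI[of _ "r * t"] conjI allI impI)
    show "r * t > 0" using r t by simp
    fix s :: real assume "dist s 0 < r * t"
    then have "\<bar>s / t\<bar> < r" using t by (simp add: field_simps abs_divide)
    then have "y + (s / t) *\<^sub>R axis i 1 \<in> U" using r by (auto simp: dist_norm)
    moreover have "t *\<^sub>R y + s *\<^sub>R axis i 1 = t *\<^sub>R (y + (s / t) *\<^sub>R axis i 1)"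
      using t by (simp add: scaleR_add_right)
    ultimately show "g (t *\<^sub>R y + s *\<^sub>R axis i 1) = t powr m * g (y + (s / t) *\<^sub>R axis i 1)"
      using hom t by simp
  qed
  have "((\<lambda>r. g (y + r *\<^sub>R axis i 1)) has_real_derivative pd i g y) (at (0 / t))"
    using has_real_derivative_pd[of g y i] pdg y by simp
  moreover have "((\<lambda>s. s / t) has_real_derivative 1 / t) (at 0)"
    using t by (auto intro!: derivative_eq_intros)
  ultimately have "((\<lambda>s. g (y + (s / t) *\<^sub>R axis i 1)) has_real_derivative pd i g y * (1 / t)) (at 0)"
    by (rule DERIV_chain2)
  then have "((\<lambda>s. t powr m * g (y + (s / t) *\<^sub>R axis i 1)) has_real_derivative t powr m * (pd i g y * (1 / t))) (at 0)"
    by (rule DERIV_cmult)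
  then have "((\<lambda>s. g (t *\<^sub>R y + s *\<^sub>R axis i 1)) has_real_derivative t powr m * (pd i g y * (1 / t))) (at 0)"
    using DERIV_cong_ev[OF refl ev refl] by simp
  then have "pd i g (t *\<^sub>R y) = t powr m * (pd i g y * (1 / t))" by (rule pd_eqI)
  also have "\<dots> = t powr (m - 1) * pd i g y" using t by (simp add: powr_diff)
  finally show ?thesis .
qed

lemma euler_homogeneous:
  fixes g :: "real^'n::finite \<Rightarrow> real"
  assumes U: "open U"
    and hom: "\<forall>t>0. \<forall>y\<in>U. g (t *\<^sub>R y) = t powr m * g y"
    and pdg: "\<forall>i. \<forall>y\<in>U. partially_differentiable g y i" and cont: "\<forall>i. continuous_on U (pd i g)"
    and x: "x \<in> U"
  shows "(\<Sum>i\<in>UNIV. pd i g x * x$i) = m * g x"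
proof -
  have L: "(g has_derivative (\<lambda>v. \<Sum>i\<in>UNIV. pd i g x * v$i)) (at (1 *\<^sub>R x))"
    using has_derivative_continuous_pd[OF U x pdg cont] by simp
  have "((\<lambda>t. t *\<^sub>R x) has_derivative (\<lambda>t. t *\<^sub>R x)) (at 1)"
    by (auto intro!: derivative_eq_intros)
  from has_derivative_compose[OF this L]
  have "((\<lambda>t. g (t *\<^sub>R x)) has_derivative (\<lambda>t. \<Sum>i\<in>UNIV. pd i g x * (t *\<^sub>R x)$i)) (at 1)" .
  then have D1: "((\<lambda>t. g (t *\<^sub>R x)) has_real_derivative (\<Sum>i\<in>UNIV. pd i g x * x$i)) (at 1)"
    by (rule has_derivative_imp_has_field_derivative) (simp add: sum_distrib_left algebra_simps)
  have "eventually (\<lambda>t. t \<in> {0<..}) (nhds (1::real))"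
    by (rule eventually_nhds_in_open) auto
  then have ev: "eventually (\<lambda>t. t powr m * g x = g (t *\<^sub>R x)) (nhds (1::real))"
    by (rule eventually_mono) (use hom x in auto)
  have "((\<lambda>t. t powr m * g x) has_real_derivative m * 1 powr (m - 1) * g x) (at 1)"
    by (intro DERIV_cmult_right has_real_derivative_powr) simp
  then have D2: "((\<lambda>t. g (t *\<^sub>R x)) has_real_derivative m * g x) (at 1)"
    using DERIV_cong_ev[OF refl ev refl] by simp
  show ?thesis using DERIV_unique[OF D1 D2] .
qed

section \<open>Smoothness\<close>

lemma pd_add:
  assumes "partially_differentiable f x i" "partially_differentiable g x i"
  shows "partially_differentiable (\<lambda>y. f y + g y) x i"
    and "pd i (\<lambda>y. f y + g y) x = pd i f x + pd i g x"
proof -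
  have "((\<lambda>t. f (x + t *\<^sub>R axis i 1) + g (x + t *\<^sub>R axis i 1)) has_real_derivative
      pd i f x + pd i g x) (at 0)"
    using assms by (intro DERIV_add has_real_derivative_pd)
  from pd_eqI[OF this] show "partially_differentiable (\<lambda>y. f y + g y) x i"
    and "pd i (\<lambda>y. f y + g y) x = pd i f x + pd i g x" by simp_all
qed

lemma pd_mult:
  assumes "partially_differentiable f x i" "partially_differentiable g x i"
  shows "partially_differentiable (\<lambda>y. f y * g y) x i"
    and "pd i (\<lambda>y. f y * g y) x = pd i f x * g x + f x * pd i g x"
proof -
  have "((\<lambda>t. f (x + t *\<^sub>R axis i 1) * g (x + t *\<^sub>R axis i 1)) has_real_derivative
      pd i f x * g x + f x * pd i g x) (at 0)"
    using DERIV_mult[OF has_real_derivative_pd[OF assms(1)] has_real_derivative_pd[OF assms(2)]]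
    by (simp add: mult.commute)
  from pd_eqI[OF this] show "partially_differentiable (\<lambda>y. f y * g y) x i"
    and "pd i (\<lambda>y. f y * g y) x = pd i f x * g x + f x * pd i g x" by simp_all
qed

lemma pd_quotient_shift:
  assumes "partially_differentiable f x i" "partially_differentiable g x i" "f x + c \<noteq> 0"
  shows "partially_differentiable (\<lambda>y. g y / (f y + c)) x i"
    and "pd i (\<lambda>y. g y / (f y + c)) x = (pd i g x * (f x + c) - g x * pd i f x) / (f x + c)^2"
proof -
  have "((\<lambda>t. g (x + t *\<^sub>R axis i 1) / (f (x + t *\<^sub>R axis i 1) + c)) has_real_derivative
      (pd i g x * (f (x + 0 *\<^sub>R axis i 1) + c) - g (x + 0 *\<^sub>R axis i 1) * (pd i f x + 0))
        / ((f (x + 0 *\<^sub>R axis i 1) + c) * (f (x + 0 *\<^sub>R axis i 1) + c))) (at 0)"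
    using assms by (intro DERIV_divide DERIV_add has_real_derivative_pd) auto
  from pd_eqI[OF this] show "partially_differentiable (\<lambda>y. g y / (f y + c)) x i"
    and "pd i (\<lambda>y. g y / (f y + c)) x = (pd i g x * (f x + c) - g x * pd i f x) / (f x + c)^2"
    by (simp_all add: power2_eq_square)
qed

lemma pd_const: "pd i (\<lambda>x. a) x = 0"
  unfolding pd_def by (rule DERIV_imp_deriv) simp

lemma partially_differentiable_const: "partially_differentiable (\<lambda>x. a) x i"
  by (simp add: partially_differentiable_def)

lemma smooth_on_iter_pd_continuous: "smooth_on U f \<Longrightarrow> continuous_on U (iter_pd is f)"
  by (simp add: smooth_on_def)

lemma smooth_on_iter_pd_partially_differentiable:
  "smooth_on U f \<Longrightarrow> x \<in> U \<Longrightarrow> partially_differentiable (iter_pd is f) x i"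
  by (simp add: smooth_on_def partially_differentiable_def)

lemma smooth_onI_pd_closed_family:
  fixes V :: "(real^'n::finite) set" and S :: "(real^'n \<Rightarrow> real) set"
  assumes V: "open V"
    and cont: "\<forall>f\<in>S. continuous_on V f"
    and diff: "\<forall>f\<in>S. \<forall>i. \<forall>x\<in>V. partially_differentiable f x i"
    and closed: "\<forall>f\<in>S. \<forall>i. \<exists>g\<in>S. \<forall>x\<in>V. pd i f x = g x"
    and g: "g \<in> S" and fg: "\<forall>x\<in>V. f x = g x"
  shows "smooth_on V f"
proof -
  have iter: "\<forall>g\<in>S. \<exists>g'\<in>S. \<forall>x\<in>V. iter_pd is g x = g' x" for "is"
  proof (induction "is")
    case (Cons i "is")
    show ?case
    proof
      fix g assume "g \<in> S"
      then obtain g' where g': "g' \<in> S" "\<forall>x\<in>V. iter_pd is g x = g' x" using Cons by blast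
      then obtain g'' where g'': "g'' \<in> S" "\<forall>x\<in>V. pd i g' x = g'' x" using closed by blast
      have "\<forall>x\<in>V. iter_pd (i # is) g x = g'' x"
        using pd_cong_open[OF V _ g'(2)] g''(2) by simp
      then show "\<exists>g'\<in>S. \<forall>x\<in>V. iter_pd (i # is) g x = g' x" using g'' by blast
    qed
  qed auto
  show ?thesis unfolding smooth_on_def
  proof (intro allI conjI ballI)
    fix "is"
    obtain g' where g': "g' \<in> S" "\<forall>x\<in>V. iter_pd is g x = g' x" using iter g by blast
    have eq: "\<forall>x\<in>V. g' x = iter_pd is f x"
      using iter_pd_cong_open[OF V fg, of "is"] g'(2) by simp
    show "continuous_on V (iter_pd is f)"
      using cont g'(1) continuous_on_cong[OF refl, of V g' "iter_pd is f"] eq by auto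
    fix i x assume x: "x \<in> V"
    have "partially_differentiable (iter_pd is f) x i"
      by (rule partially_differentiable_cong_open[OF V x eq]) (use diff g'(1) x in auto)
    then show "(\<lambda>t. iter_pd is f (x + t *\<^sub>R axis i 1)) differentiable at 0"
      unfolding partially_differentiable_def .
  qed
qed

text \<open>Every coefficient of \<open>gprime h c\<close> lies in this algebra, which is closed under partial
  differentiation wherever \<open>h\<close> is smooth and \<open>h + c > 0\<close>; this is how their smoothness is obtained.\<close>

inductive_set recip_pd_algebra :: "(real^'n::finite \<Rightarrow> real) \<Rightarrow> real \<Rightarrow> (real^'n \<Rightarrow> real) set"
  for h c where
  iter_pd: "iter_pd is h \<in> recip_pd_algebra h c"
| recip: "(\<lambda>x. 1 / (h x + c)) \<in> recip_pd_algebra h c"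
| const: "(\<lambda>x. a) \<in> recip_pd_algebra h c"
| add: "f \<in> recip_pd_algebra h c \<Longrightarrow> g \<in> recip_pd_algebra h c \<Longrightarrow> (\<lambda>x. f x + g x) \<in> recip_pd_algebra h c"
| mult: "f \<in> recip_pd_algebra h c \<Longrightarrow> g \<in> recip_pd_algebra h c \<Longrightarrow> (\<lambda>x. f x * g x) \<in> recip_pd_algebra h c"

lemma recip_pd_algebra_pd_closed:
  fixes h :: "real^'n::finite \<Rightarrow> real"
  assumes V: "open V" "V \<subseteq> U" and h: "smooth_on U h" and pos: "\<forall>x\<in>V. h x + c > 0"
    and f: "f \<in> recip_pd_algebra h c"
  shows "continuous_on V f \<and> (\<forall>i. \<forall>x\<in>V. partially_differentiable f x i)
    \<and> (\<forall>i. \<exists>g\<in>recip_pd_algebra h c. \<forall>x\<in>V. pd i f x = g x)"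
  using f
proof (induction rule: recip_pd_algebra.induct)
  case (iter_pd "is")
  have "\<forall>x\<in>V. pd i (iter_pd is h) x = iter_pd (i # is) h x" for i by simp
  then show ?case
    using continuous_on_subset[OF smooth_on_iter_pd_continuous[OF h] V(2)]
      smooth_on_iter_pd_partially_differentiable[OF h] V(2) recip_pd_algebra.iter_pd
    by blast
next
  case recip
  have pdh: "partially_differentiable h x i" if "x \<in> V" for x i
    using smooth_on_iter_pd_partially_differentiable[OF h, of x "[]"] V(2) that by auto
  have nz: "h x + c \<noteq> 0" if "x \<in> V" for x using pos that by force
  have "(\<lambda>x. (-1 * iter_pd [i] h x * (1 / (h x + c))) * (1 / (h x + c))) \<in> recip_pd_algebra h c" for i
    by (intro recip_pd_algebra.intros)
  moreover have "\<forall>x\<in>V. pd i (\<lambda>x. 1 / (h x + c)) x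
      = (-1 * iter_pd [i] h x * (1 / (h x + c))) * (1 / (h x + c))" for i
    using pd_quotient_shift(2)[OF pdh partially_differentiable_const[of 1] nz]
    by (simp add: pd_const power2_eq_square)
  moreover have "continuous_on V (\<lambda>x. 1 / (h x + c))"
    using nz continuous_on_subset[OF smooth_on_iter_pd_continuous[OF h, of "[]"] V(2)]
    by (intro continuous_intros) auto
  ultimately show ?case
    using pd_quotient_shift(1)[OF pdh partially_differentiable_const[of 1] nz]
    by (auto intro!: bexI)
next
  case (const a)
  then show ?case
    by (auto simp: partially_differentiable_const pd_const intro: recip_pd_algebra.const)
next
  case (add f g)
  have "\<exists>H\<in>recip_pd_algebra h c. \<forall>x\<in>V. pd i (\<lambda>x. f x + g x) x = H x" for i
  proof -
    obtain F G where "F \<in> recip_pd_algebra h c" "\<forall>x\<in>V. pd i f x = F x"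
      and "G \<in> recip_pd_algebra h c" "\<forall>x\<in>V. pd i g x = G x"
      using add.IH by blast
    then show ?thesis
      using add.IH by (intro bexI[of _ "\<lambda>x. F x + G x"]) (auto simp: pd_add intro: recip_pd_algebra.add)
  qed
  then show ?case
    using add.IH by (auto intro: continuous_intros pd_add(1))
next
  case (mult f g)
  have "\<exists>H\<in>recip_pd_algebra h c. \<forall>x\<in>V. pd i (\<lambda>x. f x * g x) x = H x" for i
  proof -
    obtain F G where "F \<in> recip_pd_algebra h c" "\<forall>x\<in>V. pd i f x = F x"
      and "G \<in> recip_pd_algebra h c" "\<forall>x\<in>V. pd i g x = G x"
      using mult.IH by blast
    then show ?thesis
      using mult.IH mult.hyps
      by (intro bexI[of _ "\<lambda>x. F x * g x + f x * G x"]) (auto simp: pd_mult intro: recip_pd_algebra.intros)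
  qed
  then show ?case
    using mult.IH by (auto intro: continuous_intros pd_mult(1))
qed

section \<open>The Hessian of \<open>ln (h + c)\<close>\<close>

lemma pd_ln_shift:
  assumes "partially_differentiable f y j" "f y + c > 0"
  shows "pd j (\<lambda>x. ln (f x + c)) y = pd j f y / (f y + c)"
proof -
  have "((\<lambda>t. ln (f (y + t *\<^sub>R axis j 1) + c)) has_real_derivative
      1 / (f (y + 0 *\<^sub>R axis j 1) + c) * (pd j f y + 0)) (at 0)"
    using assms by (intro DERIV_chain2[OF DERIV_ln_divide] DERIV_add has_real_derivative_pd) auto
  from pd_eqI(2)[OF this] show ?thesis by simp
qed

lemma hess_axis: "hess f x (axis i 1) (axis j 1) = pd i (pd j f) x"
  unfolding hess_def by (simp add: axis_def if_distrib[of "(*) _"] cong: if_cong)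

lemma hess_commute:
  assumes "\<And>i j. pd i (pd j f) x = pd j (pd i f) x"
  shows "hess f x v w = hess f x w v"
proof -
  have "hess f x v w = (\<Sum>j\<in>UNIV. \<Sum>i\<in>UNIV. pd i (pd j f) x * v$i * w$j)"
    unfolding hess_def by (rule sum.swap)
  also have "\<dots> = hess f x w v"
    unfolding hess_def using assms by (simp add: mult.commute mult.left_commute)
  finally show ?thesis .
qed

lemma hess_add_scaled:
  assumes "\<And>i j. pd i (pd j f) x = pd j (pd i f) x"
  shows "hess f x (u + a *\<^sub>R y) (u + a *\<^sub>R y)
    = hess f x u u + 2 * a * hess f x y u + a^2 * hess f x y y"
proof -
  have "hess f x (u + a *\<^sub>R y) (u + a *\<^sub>R y)
      = hess f x u u + a * hess f x u y + a * hess f x y u + a^2 * hess f x y y"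
    unfolding hess_def
    by (simp add: algebra_simps power2_eq_square sum.distrib sum_distrib_left)
  then show ?thesis using hess_commute[OF assms, of u y] by simp
qed

lemma hess_scaleR: "hess f x (l *\<^sub>R v) (l *\<^sub>R w) = l * l * hess f x v w"
  unfolding hess_def by (simp add: sum_distrib_left algebra_simps)

lemma dif_scaleR: "dif f x (l *\<^sub>R v) = l * dif f x v"
  unfolding dif_def by (simp add: sum_distrib_left algebra_simps)

lemma dif_diff: "dif f x (v - a *\<^sub>R y) = dif f x v - a * dif f x y"
  unfolding dif_def by (simp add: algebra_simps sum_subtractf sum_distrib_left)

lemma double_sum_split:
  fixes r s :: "'a::comm_ring"
  shows "(\<Sum>i\<in>A. \<Sum>j\<in>B. r * (- H i j) + s * (a i * b j))
    = r * (- (\<Sum>i\<in>A. \<Sum>j\<in>B. H i j)) + s * (\<Sum>i\<in>A. a i) * (\<Sum>j\<in>B. b j)"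
proof -
  have "r * (- (\<Sum>i\<in>A. \<Sum>j\<in>B. H i j)) = (\<Sum>i\<in>A. \<Sum>j\<in>B. r * (- H i j))"
    by (simp only: sum_negf[symmetric] sum_distrib_left)
  moreover have "s * (\<Sum>i\<in>A. a i) * (\<Sum>j\<in>B. b j) = (\<Sum>i\<in>A. \<Sum>j\<in>B. s * (a i * b j))"
    unfolding mult.assoc sum_product by (simp only: sum_distrib_left)
  ultimately show ?thesis by (simp only: sum.distrib)
qed

lemma neg_hess_ln_shift:
  fixes f :: "real^'n::finite \<Rightarrow> real"
  assumes V: "open V" "x \<in> V" and pos: "\<forall>y\<in>V. f y + c > 0"
    and pdf: "\<forall>y\<in>V. \<forall>i. partially_differentiable f y i"
    and pdf2: "\<forall>y\<in>V. \<forall>i j. partially_differentiable (pd j f) y i"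
  shows "- hess (\<lambda>y. ln (f y + c)) x v w
    = 1 / (f x + c) * (- hess f x v w) + 1 / (f x + c)^2 * dif f x v * dif f x w"
proof -
  define q where "q = f x + c"
  have q: "q \<noteq> 0" using pos V(2) unfolding q_def by force
  have "pd i (pd j (\<lambda>y. ln (f y + c))) x = pd i (\<lambda>y. pd j f y / (f y + c)) x" for i j
    using pdf pos by (intro pd_cong_open[OF V]) (auto intro!: pd_ln_shift)
  also have "\<dots> i j = (pd i (pd j f) x * q - pd j f x * pd i f x) / q^2" for i j
    using pdf pdf2 V(2) q unfolding q_def by (intro pd_quotient_shift) auto
  finally have pd2: "pd i (pd j (\<lambda>y. ln (f y + c))) x
      = (pd i (pd j f) x * q - pd j f x * pd i f x) / q^2" for i j .
  have "- hess (\<lambda>y. ln (f y + c)) x v w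
      = (\<Sum>i\<in>UNIV. \<Sum>j\<in>UNIV. 1 / q * (- (pd i (pd j f) x * v$i * w$j))
          + 1 / q^2 * ((pd i f x * v$i) * (pd j f x * w$j)))"
    unfolding hess_def pd2 sum_negf[symmetric]
    by (intro sum.cong refl) (use q in \<open>simp add: field_simps power2_eq_square\<close>)
  also have "\<dots> = 1 / q * (- hess f x v w) + 1 / q^2 * dif f x v * dif f x w"
    unfolding hess_def dif_def by (rule double_sum_split)
  finally show ?thesis by (simp add: q_def)
qed

lemma smooth_on_gprime_axis:
  fixes h :: "real^'n::finite \<Rightarrow> real"
  assumes V: "open V" "V \<subseteq> U" and h: "smooth_on U h" and pos: "\<forall>x\<in>V. h x + c > 0"
  shows "smooth_on V (\<lambda>x. gprime h c x (axis i 1) (axis j 1))"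
proof -
  note closed = recip_pd_algebra_pd_closed[OF V h pos]
  have "(\<lambda>y. iter_pd [j] h y * (1 / (h y + c))) \<in> recip_pd_algebra h c"
    by (intro recip_pd_algebra.intros)
  then obtain G where G: "G \<in> recip_pd_algebra h c"
    "\<forall>x\<in>V. pd i (\<lambda>y. iter_pd [j] h y * (1 / (h y + c))) x = G x"
    using closed by blast
  have "\<forall>x\<in>V. gprime h c x (axis i 1) (axis j 1) = -1 * G x"
  proof
    fix x assume x: "x \<in> V"
    have "\<forall>y\<in>V. pd j (\<lambda>x. ln (h x + c)) y = iter_pd [j] h y * (1 / (h y + c))"
      using smooth_on_iter_pd_partially_differentiable[OF h, of _ "[]"] V(2) pos
      by (auto intro!: pd_ln_shift)
    from pd_cong_open[OF V(1) x this]
    have "pd i (pd j (\<lambda>x. ln (h x + c))) x = G x" using G(2) x by simp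
    then show "gprime h c x (axis i 1) (axis j 1) = -1 * G x"
      unfolding gprime_def hess_axis by simp
  qed
  moreover have "(\<lambda>x. -1 * G x) \<in> recip_pd_algebra h c"
    using G(1) by (intro recip_pd_algebra.intros)
  ultimately show ?thesis
    using closed by (intro smooth_onI_pd_closed_family[OF V(1), where S = "recip_pd_algebra h c"]) blast+
qed

section \<open>Homogeneous potentials\<close>

locale homogeneous_potential =
  fixes U :: "(real^'n::finite) set" and h :: "real^'n \<Rightarrow> real" and k :: real
  assumes open_U: "open U"
    and cone: "\<And>t x. t > 0 \<Longrightarrow> x \<in> U \<Longrightarrow> t *\<^sub>R x \<in> U"
    and smooth: "smooth_on U h"
    and pos: "\<And>x. x \<in> U \<Longrightarrow> h x > 0"
    and k_gt_1: "k > 1"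
    and homogeneous: "\<And>t x. t > 0 \<Longrightarrow> x \<in> U \<Longrightarrow> h (t *\<^sub>R x) = t powr k * h x"
begin

lemma partially_differentiable_h: "x \<in> U \<Longrightarrow> partially_differentiable h x i"
  using smooth_on_iter_pd_partially_differentiable[OF smooth, of x "[]"] by simp

lemma partially_differentiable_pd_h: "x \<in> U \<Longrightarrow> partially_differentiable (pd j h) x i"
  using smooth_on_iter_pd_partially_differentiable[OF smooth, of x "[j]"] by simp

lemma continuous_on_h: "continuous_on U h"
  using smooth_on_iter_pd_continuous[OF smooth, of "[]"] by simp

lemma continuous_on_pd_h: "continuous_on U (pd j h)"
  using smooth_on_iter_pd_continuous[OF smooth, of "[j]"] by simp

lemma continuous_on_pd_pd_h: "continuous_on U (pd i (pd j h))"
  using smooth_on_iter_pd_continuous[OF smooth, of "[i, j]"] by simp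

lemma pd_h_homogeneous: "t > 0 \<Longrightarrow> x \<in> U \<Longrightarrow> pd j h (t *\<^sub>R x) = t powr (k - 1) * pd j h x"
  using homogeneous partially_differentiable_h by (intro pd_homogeneous[OF open_U]) auto

lemma pd_pd_h_homogeneous:
  "t > 0 \<Longrightarrow> x \<in> U \<Longrightarrow> pd i (pd j h) (t *\<^sub>R x) = t powr (k - 2) * pd i (pd j h) x"
  using pd_h_homogeneous partially_differentiable_pd_h
    pd_homogeneous[OF open_U, of "pd j h" "k - 1" i t x] by simp

lemma pd_h_commute: "x \<in> U \<Longrightarrow> pd i (pd j h) x = pd j (pd i h) x"
  using partially_differentiable_h partially_differentiable_pd_h continuous_on_pd_pd_h
  by (intro pd_commute[OF open_U]) auto

lemma dif_h_homogeneous: "t > 0 \<Longrightarrow> x \<in> U \<Longrightarrow> dif h (t *\<^sub>R x) v = t powr (k - 1) * dif h x v"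
  unfolding dif_def by (simp add: pd_h_homogeneous sum_distrib_left mult.assoc)

lemma hess_h_homogeneous: "t > 0 \<Longrightarrow> x \<in> U \<Longrightarrow> hess h (t *\<^sub>R x) v w = t powr (k - 2) * hess h x v w"
  unfolding hess_def by (simp add: pd_pd_h_homogeneous sum_distrib_left mult.assoc)

lemma dif_h_position: "x \<in> U \<Longrightarrow> dif h x x = k * h x"
  unfolding dif_def using partially_differentiable_h continuous_on_pd_h homogeneous
  by (intro euler_homogeneous[OF open_U]) auto

lemma gU_position: "x \<in> U \<Longrightarrow> gU h x x v = - (k - 1) * dif h x v"
proof -
  assume x: "x \<in> U"
  have euler: "(\<Sum>i\<in>UNIV. pd i (pd j h) x * x$i) = (k - 1) * pd j h x" for j
    using partially_differentiable_pd_h continuous_on_pd_pd_h pd_h_homogeneous x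
    by (intro euler_homogeneous[OF open_U]) auto
  have "hess h x x v = (\<Sum>j\<in>UNIV. (\<Sum>i\<in>UNIV. pd i (pd j h) x * x$i) * v$j)"
    unfolding hess_def by (subst sum.swap) (simp add: sum_distrib_right)
  also have "\<dots> = (k - 1) * dif h x v"
    unfolding euler dif_def by (simp add: sum_distrib_left mult.assoc)
  finally show ?thesis by (simp add: gU_def algebra_simps)
qed

lemma gU_symmetric: "x \<in> U \<Longrightarrow> gU h x v w = gU h x w v"
  unfolding gU_def using hess_commute[OF pd_h_commute] by simp

lemma Uc_subset: "Uc U h k c \<subseteq> U"
  unfolding Uc_def by auto

lemma Uc_shift_pos:
  assumes "x \<in> Uc U h k c" shows "h x + c > 0"
  using assms pos[of x] unfolding Uc_def by (auto split: if_splits)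

lemma Uc_coeff_pos:
  assumes "x \<in> Uc U h k c" shows "h x - c * (k - 1) > 0"
proof (cases "c \<le> 0")
  case True
  then have "c * (k - 1) \<le> 0" using k_gt_1 by (simp add: mult_nonpos_nonneg)
  with True assms pos[of x] show ?thesis unfolding Uc_def by auto
next
  case False
  with assms show ?thesis unfolding Uc_def by auto
qed

lemma open_Uc: "open (Uc U h k c)"
proof -
  have "open {x \<in> U. 0 < h x + a}" for a
  proof -
    have "open (U \<inter> (\<lambda>x. h x + a) -` {0<..})"
      by (intro continuous_open_preimage continuous_intros continuous_on_h open_U open_greaterThan)
    moreover have "U \<inter> (\<lambda>x. h x + a) -` {0<..} = {x \<in> U. 0 < h x + a}" by auto
    ultimately show ?thesis by simp
  qed
  from this[of c] this[of "- c * (k - 1)"] show ?thesis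
    unfolding Uc_def by simp
qed

lemma gprime_eq_gU:
  "x \<in> Uc U h k c \<Longrightarrow>
    gprime h c x v w = 1 / (h x + c) * gU h x v w + 1 / (h x + c)^2 * dif h x v * dif h x w"
  unfolding gprime_def gU_def
  using Uc_shift_pos subsetD[OF Uc_subset] partially_differentiable_h partially_differentiable_pd_h
  by (intro neg_hess_ln_shift[OF open_Uc]) auto

lemma gprime_eq_gcheck:
  assumes x: "x \<in> Uc U h k c"
  shows "gprime h c x v w = 1 / (h x + c) * gcheck h x v w
    + (h x - c * (k - 1)) / (k * h x) * (1 / (h x + c)^2) * dif h x v * dif h x w"
proof -
  have xU: "x \<in> U" using x Uc_subset by auto
  have hx: "h x > 0" using pos[OF xU] .
  have q: "h x + c > 0" using Uc_shift_pos[OF x] .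
  have "gcheck h x v w = gU h x v w + (k - 1) / (k * h x) * dif h x v * dif h x w"
    unfolding gcheck_def gU_position[OF xU] dif_h_position[OF xU]
    using hx k_gt_1 by (simp add: field_simps)
  moreover have "1 / q * G + 1 / q^2 * D
      = 1 / q * (G + (k - 1) / (k * hx) * D) + (hx - (q - hx) * (k - 1)) / (k * hx) * (1 / q^2) * D"
    if "q \<noteq> 0" "hx \<noteq> 0" for q hx G D :: real
    using that k_gt_1 by (simp add: field_simps power2_eq_square)
  from this[of "h x + c" "h x"]
  have "1 / (h x + c) * G + 1 / (h x + c)^2 * D
      = 1 / (h x + c) * (G + (k - 1) / (k * h x) * D) + (h x - c * (k - 1)) / (k * h x) * (1 / (h x + c)^2) * D"
    for G D using hx q by simp
  ultimately show ?thesis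
    unfolding gprime_eq_gU[OF x] by (simp add: mult.assoc)
qed

lemma gprime_symmetric:
  assumes "x \<in> Uc U h k c" shows "gprime h c x v w = gprime h c x w v"
proof -
  have "x \<in> U" using assms Uc_subset by auto
  then have "gU h x v w = gU h x w v" by (rule gU_symmetric)
  then show ?thesis unfolding gprime_eq_gU[OF assms] by (simp add: mult.commute)
qed

lemma smooth_on_gprime: "smooth_on (Uc U h k c) (\<lambda>x. gprime h c x (axis i 1) (axis j 1))"
  using Uc_shift_pos by (intro smooth_on_gprime_axis[OF open_Uc Uc_subset smooth]) auto

lemma scaleR_mem_Uc_iff:
  assumes l: "l > 0" and x: "x \<in> U"
  shows "l *\<^sub>R x \<in> Uc U h k (l powr k * c) \<longleftrightarrow> x \<in> Uc U h k c"
proof -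
  have L: "l powr k > 0" using l by simp
  have "h (l *\<^sub>R x) + l powr k * c = l powr k * (h x + c)"
    and "h (l *\<^sub>R x) - l powr k * c * (k - 1) = l powr k * (h x - c * (k - 1))"
    using homogeneous[OF l x] by (simp_all add: algebra_simps)
  then have "0 < h (l *\<^sub>R x) + l powr k * c \<longleftrightarrow> 0 < h x + c"
    and "0 < h (l *\<^sub>R x) - l powr k * c * (k - 1) \<longleftrightarrow> 0 < h x - c * (k - 1)"
    using L by (simp_all add: zero_less_mult_iff)
  moreover have "l powr k * c \<le> 0 \<longleftrightarrow> c \<le> 0" using L by (simp add: mult_le_0_iff)
  ultimately show ?thesis
    using cone[OF l x] x unfolding Uc_def by auto
qed

lemma scaleR_image_Uc:
  assumes l: "l > 0"
  shows "(\<lambda>x. l *\<^sub>R x) ` Uc U h k c = Uc U h k (l powr k * c)"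
proof
  show "(\<lambda>x. l *\<^sub>R x) ` Uc U h k c \<subseteq> Uc U h k (l powr k * c)"
    using scaleR_mem_Uc_iff[OF l] Uc_subset by blast
  show "Uc U h k (l powr k * c) \<subseteq> (\<lambda>x. l *\<^sub>R x) ` Uc U h k c"
  proof
    fix y assume y: "y \<in> Uc U h k (l powr k * c)"
    then have "y = l *\<^sub>R ((1 / l) *\<^sub>R y)" and "(1 / l) *\<^sub>R y \<in> U"
      using l cone[of "1 / l" y] y Uc_subset by auto
    with y show "y \<in> (\<lambda>x. l *\<^sub>R x) ` Uc U h k c"
      using scaleR_mem_Uc_iff[OF l] by (metis image_eqI)
  qed
qed

lemma gprime_scaleR:
  assumes l: "l > 0" and x: "x \<in> Uc U h k c"
  shows "gprime h (l powr k * c) (l *\<^sub>R x) (l *\<^sub>R v) (l *\<^sub>R w) = gprime h c x v w"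
proof -
  have xU: "x \<in> U" using x Uc_subset by auto
  have lx: "l *\<^sub>R x \<in> Uc U h k (l powr k * c)" using scaleR_mem_Uc_iff[OF l xU] x by simp
  have "l powr (k - 2) * (l * l) = l powr k" and "l powr (k - 1) * l = l powr k"
    using l by (simp_all add: powr_diff power2_eq_square)
  then have gU: "gU h (l *\<^sub>R x) (l *\<^sub>R v) (l *\<^sub>R w) = l powr k * gU h x v w"
    and dif: "dif h (l *\<^sub>R x) (l *\<^sub>R u) = l powr k * dif h x u"
    and shift: "h (l *\<^sub>R x) + l powr k * c = l powr k * (h x + c)" for u
    using homogeneous[OF l xU] hess_h_homogeneous[OF l xU] dif_h_homogeneous[OF l xU]
    by (simp_all add: gU_def hess_scaleR dif_scaleR algebra_simps)
  have "1 / (L * q) * (L * G) + 1 / (L * q)^2 * (L * a) * (L * b) = 1 / q * G + 1 / q^2 * a * b"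
    if "L > 0" "q \<noteq> 0" for L q G a b :: real
    using that by (simp add: field_simps power2_eq_square)
  then show ?thesis
    unfolding gprime_eq_gU[OF lx] gprime_eq_gU[OF x] gU dif shift
    using l Uc_shift_pos[OF x] by simp
qed

text \<open>The decomposition \<open>v = u + a \<xi>\<close> with \<open>dh(u) = 0\<close>: it shows that \<open>gcheck\<close> is positive
  semidefinite with kernel \<open>\<real>\<xi>\<close> as soon as \<open>gU\<close> is positive on \<open>ker dh\<close>.\<close>

lemma gcheck_radial_split:
  fixes v :: "real^'n"
  assumes xU: "x \<in> U"
  defines "u \<equiv> v - (dif h x v / (k * h x)) *\<^sub>R x"
  shows "dif h x u = 0" and "gcheck h x v v = gU h x u u"
proof -
  define a where "a = dif h x v / (k * h x)"
  have hx: "h x > 0" using pos[OF xU] .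
  have k: "k \<noteq> 0" "k - 1 \<noteq> 0" using k_gt_1 by auto
  show du: "dif h x u = 0"
    unfolding u_def dif_diff dif_h_position[OF xU] using hx k by simp
  have v: "v = u + a *\<^sub>R x" by (simp add: u_def a_def)
  have dv: "dif h x v = a * (k * h x)" using hx k by (simp add: a_def)
  have "gU h x v v = gU h x u u + 2 * a * gU h x x u + a^2 * gU h x x x"
    unfolding gU_def v hess_add_scaled[OF pd_h_commute[OF xU]] by simp
  also have "\<dots> = gU h x u u - (k - 1) * k * h x * a^2"
    unfolding gU_position[OF xU] du dif_h_position[OF xU] by (simp add: algebra_simps)
  finally have "gU h x v v = gU h x u u - (k - 1) * k * h x * a^2" .
  moreover have "gcheck h x v v = gU h x v v + (k - 1) * k * h x * a^2"
    unfolding gcheck_def gU_position[OF xU] dif_h_position[OF xU] dv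
    using hx k by (simp add: field_simps power2_eq_square)
  ultimately show "gcheck h x v v = gU h x u u" by simp
qed

end

locale homogeneous_potential_metric = homogeneous_potential +
  assumes gU_pos_level: "\<And>x v. x \<in> U \<Longrightarrow> h x = 1 \<Longrightarrow> v \<noteq> 0 \<Longrightarrow> dif h x v = 0 \<Longrightarrow> gU h x v v > 0"
begin

lemma gU_pos_ker_dif:
  assumes xU: "x \<in> U" and u: "u \<noteq> 0" and du: "dif h x u = 0"
  shows "gU h x u u > 0"
proof -
  have hx: "h x > 0" using pos[OF xU] .
  define t where "t = h x powr (-1 / k)"
  have t: "t > 0" using hx by (simp add: t_def)
  have "t powr k = h x powr (-1 / k * k)" unfolding t_def by (rule powr_powr)
  then have "h (t *\<^sub>R x) = 1" using homogeneous[OF t xU] k_gt_1 hx by (simp add: powr_minus)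
  moreover have "dif h (t *\<^sub>R x) u = 0" using dif_h_homogeneous[OF t xU] du by simp
  ultimately have "gU h (t *\<^sub>R x) u u > 0" using gU_pos_level cone[OF t xU] u by blast
  moreover have "gU h (t *\<^sub>R x) u u = t powr (k - 2) * gU h x u u"
    unfolding gU_def hess_h_homogeneous[OF t xU] by simp
  ultimately show ?thesis using t by (simp add: zero_less_mult_iff)
qed

lemma gprime_pos:
  assumes x: "x \<in> Uc U h k c" and v: "v \<noteq> 0"
  shows "gprime h c x v v > 0"
proof -
  have xU: "x \<in> U" using x Uc_subset by auto
  define u where "u = v - (dif h x v / (k * h x)) *\<^sub>R x"
  have du: "dif h x u = 0" and gc: "gcheck h x v v = gU h x u u"
    using gcheck_radial_split[OF xU] by (simp_all add: u_def)
  have q: "h x + c > 0" using Uc_shift_pos[OF x] .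
  define C where "C = (h x - c * (k - 1)) / (k * h x) * (1 / (h x + c)^2)"
  have coeff: "C > 0"
    using Uc_coeff_pos[OF x] pos[OF xU] k_gt_1 q by (simp add: C_def)
  have gU_nonneg: "gU h x u u \<ge> 0"
    using gU_pos_ker_dif[OF xU _ du] by (cases "u = 0") (auto simp: gU_def hess_def)
  show ?thesis
  proof (cases "dif h x v = 0")
    case True
    then have "gU h x u u > 0" using gU_pos_ker_dif[OF xU _ du] v by (simp add: u_def)
    then show ?thesis unfolding gprime_eq_gcheck[OF x] gc C_def[symmetric] using q True by simp
  next
    case False
    then have "dif h x v * dif h x v > 0" using not_real_square_gt_zero by blast
    then have "C * dif h x v * dif h x v > 0"
      using coeff unfolding mult.assoc by (rule mult_pos_pos[rotated])
    moreover have "1 / (h x + c) * gU h x u u \<ge> 0" using q gU_nonneg by simp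
    ultimately show ?thesis unfolding gprime_eq_gcheck[OF x] gc C_def[symmetric] by linarith
  qed
qed

end

theorem mainTheorem16:
  fixes U :: "(real^'n) set" and h :: "real^'n \<Rightarrow> real" and k :: real
  assumes U_open: "open U" and U_conn: "connected U"
    and U_cone: "\<forall>t>0. \<forall>x\<in>U. t *\<^sub>R x \<in> U"
    and h_smooth: "smooth_on U h"
    and h_pos: "\<forall>x\<in>U. h x > 0"
    and k_gt: "k > 1"
    and h_hom: "\<forall>t>0. \<forall>x\<in>U. h (t *\<^sub>R x) = t powr k * h x"
    and gU_pd: "\<forall>x\<in>U. h x = 1 \<longrightarrow> (\<forall>v. v \<noteq> 0 \<and> dif h x v = 0 \<longrightarrow> gU h x v v > 0)"
  shows
    "(\<forall>c. \<forall>x\<in>Uc U h k c. \<forall>v w.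
        gprime h c x v w = 1 / (h x + c) * gU h x v w + 1 / (h x + c)^2 * dif h x v * dif h x w)
   \<and> (\<forall>c. \<forall>x\<in>Uc U h k c. \<forall>v w.
        gprime h c x v w = 1 / (h x + c) * gcheck h x v w
          + (h x - c * (k - 1)) / (k * h x) * (1 / (h x + c)^2) * dif h x v * dif h x w)
   \<and> (\<forall>c. (\<forall>x\<in>Uc U h k c. \<forall>v w. gprime h c x v w = gprime h c x w v)
        \<and> (\<forall>x\<in>Uc U h k c. \<forall>v. v \<noteq> 0 \<longrightarrow> gprime h c x v v > 0)
        \<and> (\<forall>i j. smooth_on (Uc U h k c) (\<lambda>x. gprime h c x (axis i 1) (axis j 1))))
   \<and> (\<forall>c c'. c * c' > 0 \<longrightarrow>
        (\<exists>l>0. (\<lambda>x. l *\<^sub>R x) ` Uc U h k c = Uc U h k c'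
           \<and> (\<forall>x\<in>Uc U h k c. \<forall>v w.
                gprime h c' (l *\<^sub>R x) (l *\<^sub>R v) (l *\<^sub>R w) = gprime h c x v w)))"
proof -
  interpret homogeneous_potential_metric U h k
    using assms by unfold_locales auto
  have isometry: "\<exists>l>0. (\<lambda>x. l *\<^sub>R x) ` Uc U h k c = Uc U h k c'
      \<and> (\<forall>x\<in>Uc U h k c. \<forall>v w. gprime h c' (l *\<^sub>R x) (l *\<^sub>R v) (l *\<^sub>R w) = gprime h c x v w)"
    if "c * c' > 0" for c c'
  proof -
    define l where "l = (c' / c) powr (1 / k)"
    have ratio: "c' / c > 0" using that by (auto simp: zero_less_divide_iff zero_less_mult_iff)
    have l: "l > 0" using that by (auto simp: l_def)
    have "l powr k = c' / c"
      using ratio k_gt_1 unfolding l_def powr_powr by (simp add: abs_of_pos flip: abs_divide)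
    then have "l powr k * c = c'" using that by auto
    then show ?thesis
      using l scaleR_image_Uc[OF l, of c] gprime_scaleR[OF l] by auto
  qed
  show ?thesis
    using gprime_eq_gU gprime_eq_gcheck gprime_symmetric gprime_pos smooth_on_gprime isometry
    by auto
qed

end
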